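(* Let $q>1$ be a prime number and $k\ge1$. Then $\mathcal{Q}(\mathbf{ŁV}_{q+1}\times\mathbf{ŁV}_2)\subseteq\mathcal{Q}(\mathbf{ŁV}_{k+1})$ if and only if $q\mid k$.
   Context: $\mathbf{ŁV}_{n+1}$ is the MV-algebra (Łukasiewicz chain) on $\{0,\frac1n,\dots,\frac{n-1}n,1\}$ with $\neg x=1-x$, $x\oplus y=\min\{1,x+y\}$; $\mathbf{ŁV}_2$ is the two-element Boolean algebra. For a class (or single algebra) $K$, $\mathcal{Q}(K)$ denotes the quasivariety generated by $K$. *)

theory Defs
  imports Complex_Main "HOL-Computational_Algebra.Primes"
begin

datatype mvterm = Var nat | Zero | Neg mvterm | Oplus mvterm mvterm

record 'a mvalg =
  carrier :: "'a set"
  zero :: 'a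
  neg :: "'a \<Rightarrow> 'a"
  oplus :: "'a \<Rightarrow> 'a \<Rightarrow> 'a"

fun eval :: "'a mvalg \<Rightarrow> (nat \<Rightarrow> 'a) \<Rightarrow> mvterm \<Rightarrow> 'a" where
  "eval A v (Var i) = v i"
| "eval A v Zero = zero A"
| "eval A v (Neg t) = neg A (eval A v t)"
| "eval A v (Oplus s t) = oplus A (eval A v s) (eval A v t)"

type_synonym quasi_identity = "(mvterm \<times> mvterm) list \<times> (mvterm \<times> mvterm)"

definition satisfies_qi :: "'a mvalg \<Rightarrow> quasi_identity \<Rightarrow> bool" where
  "satisfies_qi A \<phi> \<longleftrightarrow>
     (\<forall>v. (\<forall>i. v i \<in> carrier A) \<longrightarrow>
        (\<forall>(s, t) \<in> set (fst \<phi>). eval A v s = eval A v t) \<longrightarrow>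
        eval A v (fst (snd \<phi>)) = eval A v (snd (snd \<phi>)))"

definition qtheory :: "'a mvalg \<Rightarrow> quasi_identity set" where
  "qtheory A = {\<phi>. satisfies_qi A \<phi>}"

text \<open>\<open>Q(A) \<subseteq> Q(B)\<close>: since \<open>Q(K)\<close> is the class of models of the quasi-identity
  theory of \<open>K\<close>, this means every quasi-identity valid in \<open>B\<close> is valid in \<open>A\<close>.\<close>
definition Q_subseteq :: "'a mvalg \<Rightarrow> 'b mvalg \<Rightarrow> bool" where
  "Q_subseteq A B \<longleftrightarrow> qtheory B \<subseteq> qtheory A"

text \<open>\<open>LV n\<close> is the Lukasiewicz chain \<open>\<L>V_{n+1}\<close> on \<open>{0, 1/n, ..., 1}\<close>.\<close>
definition LV :: "nat \<Rightarrow> real mvalg" where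
  "LV n = \<lparr> carrier = {real i / real n | i. i \<le> n},
            zero = 0,
            neg = (\<lambda>x. 1 - x),
            oplus = (\<lambda>x y. min 1 (x + y)) \<rparr>"

definition prod_alg :: "'a mvalg \<Rightarrow> 'b mvalg \<Rightarrow> ('a \<times> 'b) mvalg" where
  "prod_alg A B = \<lparr> carrier = carrier A \<times> carrier B,
            zero = (zero A, zero B),
            neg = (\<lambda>(x, y). (neg A x, neg B y)),
            oplus = (\<lambda>(x, y) (x', y'). (oplus A x x', oplus B y y')) \<rparr>"

end

theory Submission
  imports Defs
begin

text \<open>If \<open>q\<close> does not divide \<open>k\<close>, the chain \<open>\<L>V\<^sub>k\<^sub>+\<^sub>1\<close> has no element \<open>1/q\<close>, and this is
  expressed by a one-variable quasi-identity: its premises say that \<open>q x\<close> is idempotent (so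
  \<open>q x \<in> {0,1}\<close> in a chain) and that \<open>x \<odot> (q-1)x = 0\<close>, which together leave only \<open>x = 0\<close> and
  \<open>x = 1/q\<close>. The element \<open>(1/q, 0)\<close> of \<open>\<L>V\<^sub>q\<^sub>+\<^sub>1 \<times> \<L>V\<^sub>2\<close> violates it. Conversely, if
  \<open>q\<close> divides \<open>k\<close> then both factors are subalgebras of \<open>\<L>V\<^sub>k\<^sub>+\<^sub>1\<close>, and quasi-identities
  pass to subalgebras and products.\<close>

fun mv_mult :: "nat \<Rightarrow> mvterm \<Rightarrow> mvterm" where
  "mv_mult 0 t = Zero"
| "mv_mult (Suc j) t = Oplus t (mv_mult j t)"

definition no_fraction_qi :: "nat \<Rightarrow> quasi_identity" where
  "no_fraction_qi q =
     ([(Oplus (mv_mult q (Var 0)) (mv_mult q (Var 0)), mv_mult q (Var 0)),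
       (Neg (Oplus (Neg (Var 0)) (Neg (mv_mult (q - 1) (Var 0)))), Zero)],
      (Var 0, Zero))"

lemma satisfies_qiD:
  assumes "satisfies_qi A \<phi>" and "\<forall>i. v i \<in> carrier A"
    and "\<forall>(s, t) \<in> set (fst \<phi>). eval A v s = eval A v t"
  shows "eval A v (fst (snd \<phi>)) = eval A v (snd (snd \<phi>))"
  using assms unfolding satisfies_qi_def by blast

lemma satisfies_qi_subalg:
  assumes "carrier A \<subseteq> carrier B" and "\<And>v t. eval A v t = eval B v t"
    and "satisfies_qi B \<phi>"
  shows "satisfies_qi A \<phi>"
  unfolding satisfies_qi_def assms(2)
proof (intro allI impI)
  fix v :: "nat \<Rightarrow> 'a"
  assume "\<forall>i. v i \<in> carrier A"
  with assms(1) have "\<forall>i. v i \<in> carrier B" by blast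
  moreover assume "\<forall>(s, t) \<in> set (fst \<phi>). eval B v s = eval B v t"
  ultimately show "eval B v (fst (snd \<phi>)) = eval B v (snd (snd \<phi>))"
    by (rule satisfies_qiD[OF assms(3)])
qed

lemma eval_prod_alg:
  "eval (prod_alg A B) v t = (eval A (fst \<circ> v) t, eval B (snd \<circ> v) t)"
  by (induction t) (auto simp: prod_alg_def split: prod.splits)

lemma satisfies_qi_prod_alg:
  assumes "satisfies_qi A \<phi>" and "satisfies_qi B \<phi>"
  shows "satisfies_qi (prod_alg A B) \<phi>"
  unfolding satisfies_qi_def
proof (intro allI impI)
  fix v :: "nat \<Rightarrow> 'a \<times> 'b"
  assume "\<forall>i. v i \<in> carrier (prod_alg A B)"
  then have carrier_fst: "\<forall>i. (fst \<circ> v) i \<in> carrier A"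
    and carrier_snd: "\<forall>i. (snd \<circ> v) i \<in> carrier B"
    by (auto simp: prod_alg_def mem_Times_iff)
  assume "\<forall>(s, t) \<in> set (fst \<phi>). eval (prod_alg A B) v s = eval (prod_alg A B) v t"
  then have prems_fst: "\<forall>(s, t) \<in> set (fst \<phi>). eval A (fst \<circ> v) s = eval A (fst \<circ> v) t"
    and prems_snd: "\<forall>(s, t) \<in> set (fst \<phi>). eval B (snd \<circ> v) s = eval B (snd \<circ> v) t"
    by (auto simp: eval_prod_alg)
  from satisfies_qiD[OF assms(1) carrier_fst prems_fst] satisfies_qiD[OF assms(2) carrier_snd prems_snd]
  show "eval (prod_alg A B) v (fst (snd \<phi>)) = eval (prod_alg A B) v (snd (snd \<phi>))"
    by (simp add: eval_prod_alg)
qed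

lemma LV_ops [simp]:
  "zero (LV n) = 0"
  "neg (LV n) = (\<lambda>x. 1 - x)"
  "oplus (LV n) = (\<lambda>x y. min 1 (x + y))"
  by (simp_all add: LV_def)

lemma eval_LV_eq: "eval (LV n) v t = eval (LV m) v t"
  by (induction t) simp_all

lemma carrier_LV_mono:
  assumes "m dvd k" and "0 < k"
  shows "carrier (LV m) \<subseteq> carrier (LV k)"
proof
  fix y
  assume "y \<in> carrier (LV m)"
  then obtain i where y: "y = real i / real m" "i \<le> m" by (auto simp: LV_def)
  obtain c where c: "k = m * c" using assms(1) by blast
  with assms(2) have "c \<noteq> 0" by simp
  with y c have "y = real (i * c) / real k" "i * c \<le> k"
    by simp_all
  then show "y \<in> carrier (LV k)" unfolding LV_def by (simp only: mvalg.select_convs) blast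
qed

lemma satisfies_qi_LV_dvd:
  assumes "m dvd k" and "0 < k" and "satisfies_qi (LV k) \<phi>"
  shows "satisfies_qi (LV m) \<phi>"
  using satisfies_qi_subalg[OF carrier_LV_mono eval_LV_eq] assms .

lemma eval_LV_mv_mult:
  assumes "0 \<le> eval (LV n) v t"
  shows "eval (LV n) v (mv_mult j t) = min 1 (real j * eval (LV n) v t)"
  using assms by (induction j) (simp_all add: algebra_simps)

lemma no_fraction_qi_valid_LV:
  assumes "0 < q" and "\<not> q dvd k"
  shows "satisfies_qi (LV k) (no_fraction_qi q)"
  unfolding satisfies_qi_def
proof (intro allI impI)
  fix v :: "nat \<Rightarrow> real"
  assume "\<forall>i. v i \<in> carrier (LV k)"
  then obtain i where i: "v 0 = real i / real k" "i \<le> k" by (auto simp: LV_def)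
  then have v0_nonneg: "0 \<le> v 0" by simp
  have mult_x: "eval (LV k) v (mv_mult j (Var 0)) = min 1 (real j * v 0)" for j
    using eval_LV_mv_mult[of k v "Var 0" j] v0_nonneg by simp
  assume "\<forall>(s, t) \<in> set (fst (no_fraction_qi q)). eval (LV k) v s = eval (LV k) v t"
  then have idem: "min 1 (2 * min 1 (real q * v 0)) = min 1 (real q * v 0)"
    and orth: "1 - min 1 ((1 - v 0) + (1 - min 1 (real (q - 1) * v 0))) = 0"
    by (simp_all add: no_fraction_qi_def mult_x)
  have "v 0 = 0"
  proof (rule ccontr)
    assume "v 0 \<noteq> 0"
    with v0_nonneg assms(1) have "real q * v 0 > 0" by simp
    with idem have "real q * v 0 \<ge> 1" by linarith
    moreover have "real q * v 0 \<le> 1"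
    proof -
      from orth have "v 0 + min 1 (real (q - 1) * v 0) \<le> 1"
        by linarith
      moreover have "real (q - 1) * v 0 = real q * v 0 - v 0"
        using assms(1) by (simp add: of_nat_diff left_diff_distrib)
      ultimately show ?thesis
        using v0_nonneg by (auto simp: min_def split: if_splits)
    qed
    ultimately have "real q * v 0 = 1" by linarith
    moreover have "k \<noteq> 0" using i \<open>v 0 \<noteq> 0\<close> by auto
    ultimately have "real q * real i = real k"
      using i by (simp add: field_simps)
    then have "k = q * i" by (metis of_nat_eq_iff of_nat_mult)
    with assms(2) show False by simp
  qed
  then show "eval (LV k) v (fst (snd (no_fraction_qi q))) = eval (LV k) v (snd (snd (no_fraction_qi q)))"
    by (simp add: no_fraction_qi_def)
qed

lemma no_fraction_qi_fails_prod:
  assumes "0 < q"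
  shows "\<not> satisfies_qi (prod_alg (LV q) (LV 1)) (no_fraction_qi q)"
proof
  define v :: "nat \<Rightarrow> real \<times> real" where "v = (\<lambda>_. (1 / real q, 0))"
  have "1 / real q \<in> carrier (LV q)" "(0::real) \<in> carrier (LV 1)"
    using assms by (auto simp: LV_def intro!: exI[of _ 1] exI[of _ 0])
  then have v_carrier: "\<forall>i. v i \<in> carrier (prod_alg (LV q) (LV 1))"
    by (simp add: v_def prod_alg_def)
  have mult_fst: "eval (LV n) (fst \<circ> v) (mv_mult j (Var 0)) = min 1 (real j / real q)" for n j
    using eval_LV_mv_mult[of n "fst \<circ> v" "Var 0" j] by (simp add: v_def)
  have mult_snd: "eval (LV n) (snd \<circ> v) (mv_mult j (Var 0)) = 0" for n j
    using eval_LV_mv_mult[of n "snd \<circ> v" "Var 0" j] by (simp add: v_def)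
  have "real (q - 1) / real q = 1 - 1 / real q"
    using assms by (simp add: of_nat_diff field_simps)
  then have premises_hold: "\<forall>(s, t) \<in> set (fst (no_fraction_qi q)).
      eval (prod_alg (LV q) (LV 1)) v s = eval (prod_alg (LV q) (LV 1)) v t"
    using assms by (simp add: no_fraction_qi_def eval_prod_alg mult_fst mult_snd) (simp add: v_def)
  assume "satisfies_qi (prod_alg (LV q) (LV 1)) (no_fraction_qi q)"
  from satisfies_qiD[OF this v_carrier premises_hold]
  have "eval (prod_alg (LV q) (LV 1)) v (Var 0) = eval (prod_alg (LV q) (LV 1)) v Zero"
    by (simp add: no_fraction_qi_def)
  with assms show False by (simp add: eval_prod_alg v_def prod_alg_def)
qed

theorem corollary5p4:
  fixes q k :: nat
  assumes "prime q" and "q > 1" and "k \<ge> 1"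
  shows "Q_subseteq (prod_alg (LV q) (LV 1)) (LV k) \<longleftrightarrow> q dvd k"
proof
  assume sub: "Q_subseteq (prod_alg (LV q) (LV 1)) (LV k)"
  show "q dvd k"
  proof (rule ccontr)
    assume "\<not> q dvd k"
    with assms(2) have "no_fraction_qi q \<in> qtheory (LV k)"
      using no_fraction_qi_valid_LV[of q k] by (simp add: qtheory_def)
    with sub have "satisfies_qi (prod_alg (LV q) (LV 1)) (no_fraction_qi q)"
      unfolding Q_subseteq_def qtheory_def by blast
    with no_fraction_qi_fails_prod[of q] assms(2) show False by simp
  qed
next
  assume "q dvd k"
  have "satisfies_qi (prod_alg (LV q) (LV 1)) \<phi>" if "satisfies_qi (LV k) \<phi>" for \<phi>
  proof (rule satisfies_qi_prod_alg)
    show "satisfies_qi (LV q) \<phi>"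
      using satisfies_qi_LV_dvd[of q k \<phi>] \<open>q dvd k\<close> assms(3) that by simp
    show "satisfies_qi (LV 1) \<phi>"
      using satisfies_qi_LV_dvd[of 1 k \<phi>] assms(3) that by simp
  qed
  then show "Q_subseteq (prod_alg (LV q) (LV 1)) (LV k)"
    unfolding Q_subseteq_def qtheory_def by blast
qed

end
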